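(* Let $l^1 < l^2 < \dots < l^{S+1}$ be real numbers, let $g : [l^1, l^{S+1}] \to \mathbb{R}$ be continuous and also defined at $0$, and suppose that each interval $[l^s, l^{s+1}]$, $s \in \{1,\dots,S\}$, is either in $\check{S}$ ($g$ convex on $[l^s,l^{s+1}]$) or in $\hat{S}$ ($g$ concave on $[l^s,l^{s+1}]$). Let $\hat g : [l^1,l^{S+1}]\to\mathbb{R}$ be the piecewise-convex function equal to $g$ on intervals $[l^s,l^{s+1}]$ with $s\in\check S$, and equal to the secant $g(l^s) + \alpha^s (t - l^s)$ on intervals with $s \in \hat S$, where $\alpha^s = (g(l^{s+1}) - g(l^s))/(l^{s+1}-l^s)$. For $x \in [l^1, l^{S+1}]$ define $$\Phi(x) = \min \Big\{ \sum_{s\in\check S}\big( g(0) y^s + z^s\big) + \sum_{s \in \hat S}\big(\alpha^s x^s + (g(l^s) - \alpha^s l^s) y^s\big) \;:\; z^s \ge [g(x^s/y^s) - g(0)]\,y^s \ (s\in\check S),\ x = \sum_{s=1}^S x^s,\ l^s y^s \le x^s \le l^{s+1} y^s\ (s=1,\dots,S),\ \sum_{s=1}^S y^s = 1,\ y^s \ge 0 \Big\},$$ with the convention that when $y^s = 0$ (hence $x^s=0$) the perspective term $[g(x^s/y^s)-g(0)]y^s$ is $0$. Then $\Phi$ is the convex envelope of $\hat g$ on $[l^1,l^{S+1}]$; that is, the constraints of this continuous relaxation of the Multiple Choice Model describe the convex envelope of the (piecewise-convex) function.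
   Context: This is the continuous relaxation (binary variables $y^s$ relaxed to $y^s\ge 0$) of the Multiple Choice Model with perspective reformulation for a single univariate function $g$ in the Sequential Convex MINLP scheme: on intervals where $g$ is concave it is replaced by its secant (its convex envelope on that interval), and on intervals where $g$ is convex the perspective of $g(\cdot)-g(0)$ is used. The convex envelope of a function is the largest convex function lying below it. *)

theory Defs
  imports "HOL-Analysis.Analysis"
begin

definition is_convex_envelope :: "real set \<Rightarrow> (real \<Rightarrow> real) \<Rightarrow> (real \<Rightarrow> real) \<Rightarrow> bool" where
  "is_convex_envelope I h F \<longleftrightarrow>
     convex_on I F \<and> (\<forall>t\<in>I. F t \<le> h t) \<and>
     (\<forall>f. convex_on I f \<and> (\<forall>t\<in>I. f t \<le> h t) \<longrightarrow> (\<forall>t\<in>I. f t \<le> F t))"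

definition slope :: "(real \<Rightarrow> real) \<Rightarrow> (nat \<Rightarrow> real) \<Rightarrow> nat \<Rightarrow> real" where
  "slope g l s = (g (l (Suc s)) - g (l s)) / (l (Suc s) - l s)"

text \<open>At points lying in several concave intervals
  all secants coincide (they equal g at the breakpoints).\<close>
definition ghat :: "(real \<Rightarrow> real) \<Rightarrow> (nat \<Rightarrow> real) \<Rightarrow> nat \<Rightarrow> nat set \<Rightarrow> real \<Rightarrow> real" where
  "ghat g l S Cv t =
     (if \<exists>s\<in>{1..S} - Cv. t \<in> {l s..l (Suc s)}
      then (let s = (SOME s. s \<in> {1..S} - Cv \<and> t \<in> {l s..l (Suc s)})
            in g (l s) + slope g l s * (t - l s))
      else g t)"

definition persp :: "(real \<Rightarrow> real) \<Rightarrow> real \<Rightarrow> real \<Rightarrow> real" where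
  "persp g xv y = (if y = 0 then 0 else (g (xv / y) - g 0) * y)"

definition mcm_feasible ::
  "(real \<Rightarrow> real) \<Rightarrow> (nat \<Rightarrow> real) \<Rightarrow> nat \<Rightarrow> nat set \<Rightarrow> real
    \<Rightarrow> (nat \<Rightarrow> real) \<Rightarrow> (nat \<Rightarrow> real) \<Rightarrow> (nat \<Rightarrow> real) \<Rightarrow> bool" where
  "mcm_feasible g l S Cv x xs ys zs \<longleftrightarrow>
     (\<forall>s\<in>Cv. zs s \<ge> persp g (xs s) (ys s)) \<and>
     x = (\<Sum>s=1..S. xs s) \<and>
     (\<forall>s\<in>{1..S}. l s * ys s \<le> xs s \<and> xs s \<le> l (Suc s) * ys s) \<and>
     (\<Sum>s=1..S. ys s) = 1 \<and>
     (\<forall>s\<in>{1..S}. ys s \<ge> 0)"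

definition mcm_objective ::
  "(real \<Rightarrow> real) \<Rightarrow> (nat \<Rightarrow> real) \<Rightarrow> nat \<Rightarrow> nat set
    \<Rightarrow> (nat \<Rightarrow> real) \<Rightarrow> (nat \<Rightarrow> real) \<Rightarrow> (nat \<Rightarrow> real) \<Rightarrow> real" where
  "mcm_objective g l S Cv xs ys zs =
     (\<Sum>s\<in>Cv. g 0 * ys s + zs s) +
     (\<Sum>s\<in>{1..S} - Cv. slope g l s * xs s + (g (l s) - slope g l s * l s) * ys s)"

definition mcm_values :: "(real \<Rightarrow> real) \<Rightarrow> (nat \<Rightarrow> real) \<Rightarrow> nat \<Rightarrow> nat set \<Rightarrow> real \<Rightarrow> real set" where
  "mcm_values g l S Cv x =
     {mcm_objective g l S Cv xs ys zs | xs ys zs. mcm_feasible g l S Cv x xs ys zs}"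

definition Phi :: "(real \<Rightarrow> real) \<Rightarrow> (nat \<Rightarrow> real) \<Rightarrow> nat \<Rightarrow> nat set \<Rightarrow> real \<Rightarrow> real" where
  "Phi g l S Cv x = Inf (mcm_values g l S Cv x)"

end

theory Submission
  imports Defs
begin

text \<open>
  Substituting \<open>t\<^sub>s = x\<^sub>s / y\<^sub>s\<close> turns a feasible point into a way of writing \<open>x = \<Sum> y\<^sub>s t\<^sub>s\<close>
  as a convex combination of points \<open>t\<^sub>s \<in> {l s..l (Suc s)}\<close>, and, at the best choice of the
  \<open>z\<^sub>s\<close>, the objective into \<open>\<Sum> y\<^sub>s \<phi>\<^sub>s(t\<^sub>s)\<close>, where \<open>\<phi>\<^sub>s\<close> is \<open>g\<close> on the convex pieces and the
  secant on the others. The minimum of this expression over all such combinations exists by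
  compactness, is at most \<open>\<phi>\<^sub>s(x) = ghat(x)\<close> (put all weight on one piece containing \<open>x\<close>), is at
  least \<open>f(x)\<close> for every convex minorant \<open>f\<close> of \<open>ghat\<close> (Jensen), and is convex in \<open>x\<close>: mixing
  optimal combinations for \<open>x\<^sub>1\<close> and \<open>x\<^sub>2\<close> piece by piece gives a combination for the mixed
  point, and joint convexity of the perspective \<open>(y, t) \<mapsto> y \<phi>\<^sub>s(t)\<close> bounds its value by the
  mixed values.
\<close>

lemma convex_on_perspective_combination:
  fixes f :: "'a::real_vector \<Rightarrow> real"
  assumes f: "convex_on C f" and t1: "t1 \<in> C" and t2: "t2 \<in> C" and a: "0 \<le> a" and b: "0 \<le> b"
  shows "\<exists>t\<in>C. (a + b) *\<^sub>R t = a *\<^sub>R t1 + b *\<^sub>R t2 \<and> (a + b) * f t \<le> a * f t1 + b * f t2"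
proof (cases "a + b = 0")
  case True
  then have "a = 0" "b = 0" using a b by linarith+
  then show ?thesis using t1 by auto
next
  case False
  then have ab: "0 < a + b" using a b by linarith
  define t where "t = (a / (a + b)) *\<^sub>R t1 + (b / (a + b)) *\<^sub>R t2"
  have weights: "0 \<le> a / (a + b)" "0 \<le> b / (a + b)" "a / (a + b) + b / (a + b) = 1"
    using a b ab by (auto simp: add_divide_distrib[symmetric])
  have "t \<in> C"
    using convexD[OF convex_on_imp_convex[OF f] t1 t2 weights] by (simp add: t_def)
  moreover have "(a + b) *\<^sub>R t = a *\<^sub>R t1 + b *\<^sub>R t2"
    using ab by (simp add: t_def scaleR_add_right)
  moreover have "(a + b) * f t \<le> a * f t1 + b * f t2"
  proof -
    have "f t \<le> a / (a + b) * f t1 + b / (a + b) * f t2"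
      using f t1 t2 weights unfolding convex_on_def t_def by blast
    then have "(a + b) * f t \<le> (a + b) * (a / (a + b) * f t1 + b / (a + b) * f t2)"
      using ab by (simp add: mult_left_mono)
    also have "\<dots> = a * f t1 + b * f t2"
      using ab by (simp add: distrib_left)
    finally show ?thesis .
  qed
  ultimately show ?thesis by blast
qed

lemma convex_on_cong:
  fixes F G :: "'a::real_vector \<Rightarrow> real"
  assumes "\<And>t. t \<in> I \<Longrightarrow> F t = G t"
  shows "convex_on I F \<longleftrightarrow> convex_on I G"
proof -
  have "convex_on I G" if F: "convex_on I F" and FG: "\<And>t. t \<in> I \<Longrightarrow> F t = G t"
    for F G :: "'a \<Rightarrow> real"
    unfolding convex_on_def
  proof (intro conjI ballI allI impI)
    show "convex I" using F by (rule convex_on_imp_convex)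
    fix x y and u v :: real
    assume xy: "x \<in> I" "y \<in> I" and uv: "0 \<le> u" "0 \<le> v" "u + v = 1"
    then have "u *\<^sub>R x + v *\<^sub>R y \<in> I"
      using convexD[OF convex_on_imp_convex[OF F]] by blast
    then show "G (u *\<^sub>R x + v *\<^sub>R y) \<le> u * G x + v * G y"
      using F xy uv FG unfolding convex_on_def by metis
  qed
  then show ?thesis
    using assms by metis
qed

lemma is_convex_envelope_cong:
  assumes "\<And>t. t \<in> I \<Longrightarrow> F t = G t"
  shows "is_convex_envelope I h F \<longleftrightarrow> is_convex_envelope I h G"
  using assms convex_on_cong[of I F G] by (auto simp: is_convex_envelope_def)

text \<open>
  \<open>q s = (t\<^sup>s, y\<^sup>s)\<close>. The entries outside \<open>{1..S}\<close> are pinned to \<open>(0, 0)\<close>, which makes the set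
  compact in the product topology.
\<close>
definition piece_combinations :: "(nat \<Rightarrow> real) \<Rightarrow> nat \<Rightarrow> real \<Rightarrow> (nat \<Rightarrow> real \<times> real) set" where
  "piece_combinations l S x =
     {q. (\<forall>s. q s \<in> (if s \<in> {1..S} then {l s..l (Suc s)} \<times> {0..1} else {(0, 0)})) \<and>
         (\<Sum>s=1..S. snd (q s)) = 1 \<and> (\<Sum>s=1..S. snd (q s) * fst (q s)) = x}"

definition combination_value :: "(nat \<Rightarrow> real \<Rightarrow> real) \<Rightarrow> nat \<Rightarrow> (nat \<Rightarrow> real \<times> real) \<Rightarrow> real" where
  "combination_value \<phi> S q = (\<Sum>s=1..S. snd (q s) * \<phi> s (fst (q s)))"

lemma piece_combinationsD:
  assumes "q \<in> piece_combinations l S x" and "s \<in> {1..S}"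
  shows "fst (q s) \<in> {l s..l (Suc s)}" and "0 \<le> snd (q s)" and "snd (q s) \<le> 1"
proof -
  have "q s \<in> {l s..l (Suc s)} \<times> {0..1}"
    using assms unfolding piece_combinations_def by (metis (mono_tags, lifting) mem_Collect_eq)
  then show "fst (q s) \<in> {l s..l (Suc s)}" "0 \<le> snd (q s)" "snd (q s) \<le> 1"
    by (auto simp: mem_Times_iff)
qed

lemma compact_piece_combinations: "compact (piece_combinations l S x)"
proof -
  define B where "B s = (if s \<in> {1..S} then {l s..l (Suc s)} \<times> {0..1} else {(0::real, 0::real)})" for s
  have "compactin (product_topology (\<lambda>_. euclidean) UNIV) (PiE UNIV B)"
    unfolding compactin_PiE by (auto simp: B_def compact_Times)
  then have "compact (PiE UNIV B)"
    by (simp add: euclidean_product_topology)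
  moreover have "closed {q::nat \<Rightarrow> real \<times> real. (\<Sum>s=1..S. snd (q s)) = 1}"
    by (intro closed_Collect_eq continuous_intros) auto
  moreover have "closed {q::nat \<Rightarrow> real \<times> real. (\<Sum>s=1..S. snd (q s) * fst (q s)) = x}"
    by (intro closed_Collect_eq continuous_intros) auto
  moreover have "piece_combinations l S x = PiE UNIV B \<inter> {q. (\<Sum>s=1..S. snd (q s)) = 1} \<inter>
      {q. (\<Sum>s=1..S. snd (q s) * fst (q s)) = x}"
    unfolding piece_combinations_def B_def by (auto simp: PiE_UNIV_domain Pi_def)
  ultimately show ?thesis
    by (simp add: compact_Int_closed closed_Int)
qed

lemma continuous_on_combination_value:
  assumes "\<And>s. s \<in> {1..S} \<Longrightarrow> continuous_on {l s..l (Suc s)} (\<phi> s)"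
  shows "continuous_on (piece_combinations l S x) (combination_value \<phi> S)"
  unfolding combination_value_def
proof (intro continuous_on_sum continuous_on_mult)
  fix s assume s: "s \<in> {1..S}"
  show "continuous_on (piece_combinations l S x) (\<lambda>q. snd (q s))"
    by (intro continuous_intros continuous_on_subset[OF continuous_on_product_coordinates]) auto
  show "continuous_on (piece_combinations l S x) (\<lambda>q. \<phi> s (fst (q s)))"
  proof (rule continuous_on_compose2[OF assms[OF s]])
    show "continuous_on (piece_combinations l S x) (\<lambda>q. fst (q s))"
      by (intro continuous_intros continuous_on_subset[OF continuous_on_product_coordinates]) auto
    show "(\<lambda>q. fst (q s)) ` piece_combinations l S x \<subseteq> {l s..l (Suc s)}"
      using piece_combinationsD(1)[OF _ s] by blast
  qed
qed

lemma piece_combinations_mix: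
  assumes q1: "q1 \<in> piece_combinations l S x1" and q2: "q2 \<in> piece_combinations l S x2"
    and u: "0 \<le> u" "u \<le> 1"
    and t: "\<And>s. s \<in> {1..S} \<Longrightarrow> t s \<in> {l s..l (Suc s)} \<and>
      ((1 - u) * snd (q1 s) + u * snd (q2 s)) * t s =
        (1 - u) * snd (q1 s) * fst (q1 s) + u * snd (q2 s) * fst (q2 s)"
  shows "(\<lambda>s. if s \<in> {1..S} then (t s, (1 - u) * snd (q1 s) + u * snd (q2 s)) else (0, 0))
    \<in> piece_combinations l S ((1 - u) * x1 + u * x2)"
proof -
  have "0 \<le> (1 - u) * snd (q1 s) + u * snd (q2 s)" "(1 - u) * snd (q1 s) + u * snd (q2 s) \<le> 1"
    if "s \<in> {1..S}" for s
    using piece_combinationsD(2,3)[OF q1 that] piece_combinationsD(2,3)[OF q2 that] u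
    by (auto intro: convex_bound_le)
  moreover have "(\<Sum>s=1..S. (1 - u) * snd (q1 s) + u * snd (q2 s)) = 1"
    using q1 q2 by (simp add: piece_combinations_def sum.distrib flip: sum_distrib_left)
  moreover have "(\<Sum>s=1..S. ((1 - u) * snd (q1 s) + u * snd (q2 s)) * t s) = (1 - u) * x1 + u * x2"
    using q1 q2 t
    by (simp add: piece_combinations_def sum.distrib mult.assoc flip: sum_distrib_left)
  ultimately show ?thesis
    using t by (auto simp: piece_combinations_def)
qed

locale breakpoints =
  fixes l :: "nat \<Rightarrow> real" and S :: nat
  assumes S_pos: "1 \<le> S" and l_less: "\<forall>s\<in>{1..S}. l s < l (Suc s)"
begin

lemma l_mono: "1 \<le> i \<Longrightarrow> i \<le> j \<Longrightarrow> j \<le> Suc S \<Longrightarrow> l i \<le> l j"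
  by (rule lift_Suc_mono_le_ivl[where N = "{1..S}"]) (use l_less in \<open>auto intro: less_imp_le\<close>)

lemma piece_subset: "s \<in> {1..S} \<Longrightarrow> {l s..l (Suc s)} \<subseteq> {l 1..l (Suc S)}"
  using l_mono[of 1 s] l_mono[of "Suc s" "Suc S"] by auto

lemma pieces_overlap:
  assumes "s \<in> {1..S}" "s' \<in> {1..S}" "s < s'" "t \<in> {l s..l (Suc s)}" "t \<in> {l s'..l (Suc s')}"
  shows "t = l (Suc s)" and "t = l s'"
  using assms l_mono[of "Suc s" s'] by auto

lemma pieces_cover:
  assumes "x \<in> {l 1..l (Suc S)}"
  shows "\<exists>s\<in>{1..S}. x \<in> {l s..l (Suc s)}"
proof -
  have "\<exists>s\<in>{1..n}. x \<in> {l s..l (Suc s)}" if "1 \<le> n" "n \<le> S" "x \<le> l (Suc n)" for n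
    using that
  proof (induction n rule: nat_induct_at_least)
    case base
    then show ?case using assms by auto
  next
    case (Suc n)
    show ?case
    proof (cases "x \<le> l (Suc n)")
      case True
      with Suc show ?thesis by force
    next
      case False
      with Suc show ?thesis by (intro bexI[of _ "Suc n"]) auto
    qed
  qed
  then show ?thesis using assms S_pos by auto
qed

lemma single_piece_combination:
  assumes s: "s \<in> {1..S}" and t: "t \<in> {l s..l (Suc s)}"
  shows "\<exists>q\<in>piece_combinations l S t. combination_value \<phi> S q = \<phi> s t"
proof -
  define q where "q s' = (if s' = s then (t, 1::real) else if s' \<in> {1..S} then (l s', 0) else (0, 0))"
    for s'
  have "(\<Sum>s'=1..S. snd (q s')) = (\<Sum>s'=1..S. if s' = s then 1 else 0)"
    by (rule sum.cong) (auto simp: q_def)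
  moreover have "(\<Sum>s'=1..S. snd (q s') * fst (q s')) = (\<Sum>s'=1..S. if s' = s then t else 0)"
    by (rule sum.cong) (auto simp: q_def)
  moreover have "combination_value \<phi> S q = (\<Sum>s'=1..S. if s' = s then \<phi> s t else 0)"
    unfolding combination_value_def by (rule sum.cong) (auto simp: q_def)
  moreover have "q s' \<in> (if s' \<in> {1..S} then {l s'..l (Suc s')} \<times> {0..1} else {(0, 0)})" for s'
    using s t l_less by (auto simp: q_def less_imp_le)
  ultimately have "q \<in> piece_combinations l S t" "combination_value \<phi> S q = \<phi> s t"
    using s by (auto simp: piece_combinations_def)
  then show ?thesis by blast
qed

end

locale piecewise_convex = breakpoints +
  fixes \<phi> :: "nat \<Rightarrow> real \<Rightarrow> real"
  assumes piece_convex: "\<And>s. s \<in> {1..S} \<Longrightarrow> convex_on {l s..l (Suc s)} (\<phi> s)"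
    and piece_continuous: "\<And>s. s \<in> {1..S} \<Longrightarrow> continuous_on {l s..l (Suc s)} (\<phi> s)"
begin

definition envelope :: "real \<Rightarrow> real" where
  "envelope x = (INF q\<in>piece_combinations l S x. combination_value \<phi> S q)"

lemma envelope_le: "q \<in> piece_combinations l S x \<Longrightarrow> envelope x \<le> combination_value \<phi> S q"
proof -
  assume q: "q \<in> piece_combinations l S x"
  have "compact (combination_value \<phi> S ` piece_combinations l S x)"
    by (intro compact_continuous_image continuous_on_combination_value piece_continuous
        compact_piece_combinations)
  then have "bdd_below (combination_value \<phi> S ` piece_combinations l S x)"
    by (simp add: bounded_imp_bdd_below compact_imp_bounded)
  then show ?thesis
    unfolding envelope_def using q by (rule cINF_lower)
qed

lemma envelope_attained:
  assumes x: "x \<in> {l 1..l (Suc S)}"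
  shows "\<exists>q\<in>piece_combinations l S x. envelope x = combination_value \<phi> S q"
proof -
  have "piece_combinations l S x \<noteq> {}"
    using pieces_cover[OF x] single_piece_combination by blast
  moreover have "continuous_on (piece_combinations l S x) (combination_value \<phi> S)"
    by (rule continuous_on_combination_value) (rule piece_continuous)
  ultimately obtain q where q: "q \<in> piece_combinations l S x"
    and min: "\<forall>q'\<in>piece_combinations l S x. combination_value \<phi> S q \<le> combination_value \<phi> S q'"
    using continuous_attains_inf[OF compact_piece_combinations] by blast
  have "combination_value \<phi> S q \<le> envelope x"
    unfolding envelope_def using q min by (intro cINF_greatest) auto
  with envelope_le[OF q] q show ?thesis by force
qed

lemma envelope_le_piece: "s \<in> {1..S} \<Longrightarrow> t \<in> {l s..l (Suc s)} \<Longrightarrow> envelope t \<le> \<phi> s t"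
  using single_piece_combination envelope_le by metis

lemma convex_minorant_le_envelope:
  assumes f: "convex_on {l 1..l (Suc S)} f"
    and below: "\<And>s t. s \<in> {1..S} \<Longrightarrow> t \<in> {l s..l (Suc s)} \<Longrightarrow> f t \<le> \<phi> s t"
    and x: "x \<in> {l 1..l (Suc S)}"
  shows "f x \<le> envelope x"
proof -
  obtain q where q: "q \<in> piece_combinations l S x" and env: "envelope x = combination_value \<phi> S q"
    using envelope_attained[OF x] by blast
  note bounds = piece_combinationsD[OF q]
  have in_domain: "fst (q s) \<in> {l 1..l (Suc S)}" if "s \<in> {1..S}" for s
    using bounds(1)[OF that] piece_subset[OF that] by blast
  have "x = (\<Sum>s=1..S. snd (q s) *\<^sub>R fst (q s))"
    using q by (simp add: piece_combinations_def)
  also have "f \<dots> \<le> (\<Sum>s=1..S. snd (q s) * f (fst (q s)))"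
    using S_pos q bounds(2) in_domain
    by (intro convex_on_sum[OF _ _ f]) (auto simp: piece_combinations_def)
  also have "\<dots> \<le> combination_value \<phi> S q"
    unfolding combination_value_def using bounds below by (intro sum_mono mult_left_mono) auto
  finally show ?thesis
    using env by simp
qed

lemma convex_on_envelope: "convex_on {l 1..l (Suc S)} envelope"
proof (rule convex_onI)
  fix u x1 x2 :: real
  assume u: "0 < u" "u < 1" and x1: "x1 \<in> {l 1..l (Suc S)}" and x2: "x2 \<in> {l 1..l (Suc S)}"
  obtain q1 where q1: "q1 \<in> piece_combinations l S x1"
    and env1: "envelope x1 = combination_value \<phi> S q1"
    using envelope_attained[OF x1] by blast
  obtain q2 where q2: "q2 \<in> piece_combinations l S x2"
    and env2: "envelope x2 = combination_value \<phi> S q2"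
    using envelope_attained[OF x2] by blast
  define a where "a s = (1 - u) * snd (q1 s)" for s
  define b where "b s = u * snd (q2 s)" for s
  have "\<exists>t\<in>{l s..l (Suc s)}. (a s + b s) * t = a s * fst (q1 s) + b s * fst (q2 s) \<and>
      (a s + b s) * \<phi> s t \<le> a s * \<phi> s (fst (q1 s)) + b s * \<phi> s (fst (q2 s))"
    if s: "s \<in> {1..S}" for s
    using convex_on_perspective_combination[OF piece_convex[OF s]
        piece_combinationsD(1)[OF q1 s] piece_combinationsD(1)[OF q2 s]]
      piece_combinationsD(2)[OF q1 s] piece_combinationsD(2)[OF q2 s] u
    unfolding a_def b_def by simp
  then obtain t where t: "\<And>s. s \<in> {1..S} \<Longrightarrow> t s \<in> {l s..l (Suc s)} \<and>
      (a s + b s) * t s = a s * fst (q1 s) + b s * fst (q2 s) \<and>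
      (a s + b s) * \<phi> s (t s) \<le> a s * \<phi> s (fst (q1 s)) + b s * \<phi> s (fst (q2 s))"
    by metis
  define q where "q s = (if s \<in> {1..S} then (t s, a s + b s) else (0, 0))" for s
  have "q \<in> piece_combinations l S ((1 - u) * x1 + u * x2)"
    unfolding q_def a_def b_def
    using piece_combinations_mix[OF q1 q2, of u t] u t by (simp add: a_def b_def mult.assoc)
  then have "envelope ((1 - u) * x1 + u * x2) \<le> combination_value \<phi> S q"
    by (rule envelope_le)
  also have "\<dots> \<le> (1 - u) * combination_value \<phi> S q1 + u * combination_value \<phi> S q2"
    unfolding combination_value_def sum_distrib_left sum.distrib[symmetric]
    using t by (intro sum_mono) (simp add: q_def a_def b_def algebra_simps)
  finally show "envelope ((1 - u) *\<^sub>R x1 + u *\<^sub>R x2) \<le> (1 - u) * envelope x1 + u * envelope x2"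
    using env1 env2 by simp
qed simp

theorem is_convex_envelope_envelope:
  assumes h: "\<And>s t. s \<in> {1..S} \<Longrightarrow> t \<in> {l s..l (Suc s)} \<Longrightarrow> h t = \<phi> s t"
  shows "is_convex_envelope {l 1..l (Suc S)} h envelope"
  unfolding is_convex_envelope_def
proof (intro conjI ballI allI impI)
  show "convex_on {l 1..l (Suc S)} envelope"
    by (rule convex_on_envelope)
  fix t assume "t \<in> {l 1..l (Suc S)}"
  then obtain s where "s \<in> {1..S}" "t \<in> {l s..l (Suc s)}"
    using pieces_cover by blast
  then show "envelope t \<le> h t"
    using envelope_le_piece h by simp
next
  fix f t
  assume f: "convex_on {l 1..l (Suc S)} f \<and> (\<forall>t\<in>{l 1..l (Suc S)}. f t \<le> h t)"
    and t: "t \<in> {l 1..l (Suc S)}"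
  have "f t' \<le> \<phi> s t'" if "s \<in> {1..S}" "t' \<in> {l s..l (Suc s)}" for s t'
    using f h[OF that] subsetD[OF piece_subset[OF that(1)] that(2)] by metis
  then show "f t \<le> envelope t"
    using convex_minorant_le_envelope f t by blast
qed

end

definition mcm_piece :: "(real \<Rightarrow> real) \<Rightarrow> (nat \<Rightarrow> real) \<Rightarrow> nat set \<Rightarrow> nat \<Rightarrow> real \<Rightarrow> real" where
  "mcm_piece g l Cv s t = (if s \<in> Cv then g t else g (l s) + slope g l s * (t - l s))"

lemma (in breakpoints) mcm_piece_agree:
  assumes "s \<in> {1..S}" "s' \<in> {1..S}" "t \<in> {l s..l (Suc s)}" "t \<in> {l s'..l (Suc s')}"
  shows "mcm_piece g l Cv s t = mcm_piece g l Cv s' t"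
proof -
  have ends: "mcm_piece g l Cv r (l r) = g (l r)" "mcm_piece g l Cv r (l (Suc r)) = g (l (Suc r))"
    if "r \<in> {1..S}" for r
    using l_less that by (auto simp: mcm_piece_def slope_def)
  consider "s = s'" | "s < s'" | "s' < s" by linarith
  then show ?thesis
  proof cases
    case 2
    with pieces_overlap[OF assms(1,2) 2 assms(3,4)] ends[OF assms(1)] ends[OF assms(2)]
    show ?thesis by metis
  next
    case 3
    with pieces_overlap[OF assms(2,1) 3 assms(4,3)] ends[OF assms(1)] ends[OF assms(2)]
    show ?thesis by metis
  qed simp
qed

lemma (in breakpoints) ghat_eq_mcm_piece:
  assumes s: "s \<in> {1..S}" and t: "t \<in> {l s..l (Suc s)}"
  shows "ghat g l S Cv t = mcm_piece g l Cv s t"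
proof (cases "\<exists>s'\<in>{1..S} - Cv. t \<in> {l s'..l (Suc s')}")
  case True
  define s' where "s' = (SOME s'. s' \<in> {1..S} - Cv \<and> t \<in> {l s'..l (Suc s')})"
  have s': "s' \<in> {1..S} - Cv" "t \<in> {l s'..l (Suc s')}"
    using someI_ex[OF True[unfolded Bex_def]] unfolding s'_def by auto
  then have "ghat g l S Cv t = mcm_piece g l Cv s' t"
    using True unfolding ghat_def s'_def[symmetric] by (simp add: mcm_piece_def Let_def)
  with mcm_piece_agree[OF s _ t s'(2)] s' show ?thesis by simp
next
  case False
  with s t have "s \<in> Cv" by auto
  moreover have "ghat g l S Cv t = g t"
    unfolding ghat_def using False by (simp only: if_False)
  ultimately show ?thesis by (simp add: mcm_piece_def)
qed

lemma (in breakpoints) piecewise_convex_mcm_piece: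
  assumes g_cont: "continuous_on {l 1..l (Suc S)} g"
    and g_convex: "\<forall>s\<in>Cv. convex_on {l s..l (Suc s)} g"
  shows "piecewise_convex l S (mcm_piece g l Cv)"
proof (intro piecewise_convex.intro piecewise_convex_axioms.intro breakpoints_axioms)
  fix s assume s: "s \<in> {1..S}"
  show "convex_on {l s..l (Suc s)} (mcm_piece g l Cv s)"
  proof (cases "s \<in> Cv")
    case True
    then have "mcm_piece g l Cv s = g"
      by (simp add: mcm_piece_def fun_eq_iff)
    with True show ?thesis using g_convex by simp
  next
    case False
    show ?thesis
      unfolding convex_on_def
    proof (intro conjI ballI allI impI)
      fix x y u v :: real assume "u + v = 1"
      then have "v = 1 - u" by simp
      then show "mcm_piece g l Cv s (u *\<^sub>R x + v *\<^sub>R y) \<le> u * mcm_piece g l Cv s x + v * mcm_piece g l Cv s y"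
        using False unfolding \<open>v = 1 - u\<close> by (simp add: mcm_piece_def algebra_simps)
    qed simp
  qed
  show "continuous_on {l s..l (Suc s)} (mcm_piece g l Cv s)"
    using continuous_on_subset[OF g_cont piece_subset[OF s]]
    by (cases "s \<in> Cv") (simp_all add: mcm_piece_def continuous_intros)
qed

lemma mcm_objective_eq_combination_value:
  assumes Cv: "Cv \<subseteq> {1..S}"
    and xs: "\<And>s. s \<in> {1..S} \<Longrightarrow> xs s = snd (q s) * fst (q s)"
    and ys: "\<And>s. s \<in> {1..S} \<Longrightarrow> ys s = snd (q s)"
  shows "mcm_objective g l S Cv xs ys zs =
    combination_value (mcm_piece g l Cv) S q + (\<Sum>s\<in>Cv. zs s - persp g (xs s) (ys s))"
proof -
  have "g 0 * ys s + zs s = snd (q s) * mcm_piece g l Cv s (fst (q s)) + (zs s - persp g (xs s) (ys s))"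
    if "s \<in> Cv" for s
    using that Cv xs[of s] ys[of s] by (auto simp: persp_def mcm_piece_def algebra_simps)
  moreover have "slope g l s * xs s + (g (l s) - slope g l s * l s) * ys s =
      snd (q s) * mcm_piece g l Cv s (fst (q s))" if "s \<in> {1..S} - Cv" for s
    using that xs[of s] ys[of s] by (simp add: mcm_piece_def algebra_simps)
  ultimately show ?thesis
    unfolding mcm_objective_def combination_value_def sum.subset_diff[OF Cv finite_atLeastAtMost]
    by (simp add: sum.distrib sum_subtractf)
qed

lemma combination_value_in_mcm_values:
  assumes Cv: "Cv \<subseteq> {1..S}" and q: "q \<in> piece_combinations l S x"
  shows "combination_value (mcm_piece g l Cv) S q \<in> mcm_values g l S Cv x"
proof -
  define xs where "xs s = snd (q s) * fst (q s)" for s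
  define ys where "ys s = snd (q s)" for s
  define zs where "zs s = persp g (xs s) (ys s)" for s
  note bounds = piece_combinationsD[OF q]
  have "mcm_feasible g l S Cv x xs ys zs"
    unfolding mcm_feasible_def
  proof (intro conjI ballI)
    fix s assume s: "s \<in> {1..S}"
    show "l s * ys s \<le> xs s" "xs s \<le> l (Suc s) * ys s"
      using bounds[OF s] by (simp_all add: xs_def ys_def mult_right_mono mult.commute[of "snd (q s)"])
    show "0 \<le> ys s" using bounds(2)[OF s] by (simp add: ys_def)
  qed (use q in \<open>simp_all add: piece_combinations_def xs_def ys_def zs_def\<close>)
  moreover have "mcm_objective g l S Cv xs ys zs = combination_value (mcm_piece g l Cv) S q"
    using mcm_objective_eq_combination_value[OF Cv, of xs q ys g l zs] by (simp add: xs_def ys_def zs_def)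
  ultimately show ?thesis
    unfolding mcm_values_def by force
qed

lemma interval_scaled_point:
  fixes a b y xv :: real
  assumes "a \<le> b" "0 \<le> y" "a * y \<le> xv" "xv \<le> b * y"
  shows "\<exists>t\<in>{a..b}. y * t = xv"
proof (cases "y = 0")
  case True
  then show ?thesis using assms by (intro bexI[of _ a]) auto
next
  case False
  then have "0 < y" using assms(2) by simp
  then show ?thesis
    using assms by (intro bexI[of _ "xv / y"]) (auto simp: field_simps)
qed

lemma (in breakpoints) mcm_values_ge_combination_value:
  assumes Cv: "Cv \<subseteq> {1..S}" and w: "w \<in> mcm_values g l S Cv x"
  shows "\<exists>q\<in>piece_combinations l S x. combination_value (mcm_piece g l Cv) S q \<le> w"
proof -
  obtain xs ys zs where feasible: "mcm_feasible g l S Cv x xs ys zs"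
    and w_eq: "w = mcm_objective g l S Cv xs ys zs"
    using w unfolding mcm_values_def by blast
  note F = feasible[unfolded mcm_feasible_def]
  have "\<exists>t\<in>{l s..l (Suc s)}. ys s * t = xs s" if "s \<in> {1..S}" for s
    using F that l_less by (intro interval_scaled_point) (auto simp: mult.commute less_imp_le)
  then obtain t where t: "\<And>s. s \<in> {1..S} \<Longrightarrow> t s \<in> {l s..l (Suc s)} \<and> ys s * t s = xs s"
    by metis
  define q where "q s = (if s \<in> {1..S} then (t s, ys s) else (0, 0))" for s
  have q_xs: "xs s = snd (q s) * fst (q s)" and q_ys: "ys s = snd (q s)" if "s \<in> {1..S}" for s
    using t[OF that] that by (simp_all add: q_def)
  have "ys s \<le> 1" if "s \<in> {1..S}" for s
    using F that member_le_sum[of s "{1..S}" ys] by auto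
  then have "q s \<in> (if s \<in> {1..S} then {l s..l (Suc s)} \<times> {0..1} else {(0, 0)})" for s
    using F t by (simp add: q_def)
  moreover have "(\<Sum>s=1..S. snd (q s)) = (\<Sum>s=1..S. ys s)"
    by (rule sum.cong) (simp_all add: q_ys)
  moreover have "(\<Sum>s=1..S. snd (q s) * fst (q s)) = (\<Sum>s=1..S. xs s)"
    by (rule sum.cong) (simp_all add: q_xs)
  ultimately have "q \<in> piece_combinations l S x"
    using F unfolding piece_combinations_def by simp
  moreover have "combination_value (mcm_piece g l Cv) S q \<le> w"
  proof -
    have "0 \<le> (\<Sum>s\<in>Cv. zs s - persp g (xs s) (ys s))"
      using F by (intro sum_nonneg) auto
    then show ?thesis
      using mcm_objective_eq_combination_value[OF Cv q_xs q_ys] w_eq by simp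
  qed
  ultimately show ?thesis by blast
qed

theorem corollary1:
  fixes g :: "real \<Rightarrow> real" and l :: "nat \<Rightarrow> real" and S :: nat and Cv :: "nat set"
  assumes S: "S \<ge> 1"
    and l_mono: "\<forall>s\<in>{1..S}. l s < l (Suc s)"
    and g_cont: "continuous_on {l 1..l (Suc S)} g"
    and Cv_sub: "Cv \<subseteq> {1..S}"
    and g_convex: "\<forall>s\<in>Cv. convex_on {l s..l (Suc s)} g"
    and g_concave: "\<forall>s\<in>{1..S} - Cv. concave_on {l s..l (Suc s)} g"
  shows "(\<forall>x\<in>{l 1..l (Suc S)}.
            Phi g l S Cv x \<in> mcm_values g l S Cv x \<and>
            (\<forall>w\<in>mcm_values g l S Cv x. Phi g l S Cv x \<le> w)) \<and>
         is_convex_envelope {l 1..l (Suc S)} (ghat g l S Cv) (Phi g l S Cv)"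
proof -
  interpret breakpoints l S
    using S l_mono by unfold_locales
  interpret piecewise_convex l S "mcm_piece g l Cv"
    using piecewise_convex_mcm_piece[OF g_cont g_convex] .
  have Phi: "Phi g l S Cv x = envelope x \<and> Phi g l S Cv x \<in> mcm_values g l S Cv x \<and>
      (\<forall>w\<in>mcm_values g l S Cv x. Phi g l S Cv x \<le> w)" if x: "x \<in> {l 1..l (Suc S)}" for x
  proof -
    obtain q where q: "q \<in> piece_combinations l S x"
      and env: "envelope x = combination_value (mcm_piece g l Cv) S q"
      using envelope_attained[OF x] by blast
    have attained: "envelope x \<in> mcm_values g l S Cv x"
      using combination_value_in_mcm_values[OF Cv_sub q] env by simp
    have lower: "envelope x \<le> w" if "w \<in> mcm_values g l S Cv x" for w
      using mcm_values_ge_combination_value[OF Cv_sub that] envelope_le by force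
    have "Phi g l S Cv x = envelope x"
      unfolding Phi_def by (rule cInf_eq_minimum[OF attained lower])
    with attained lower show ?thesis by simp
  qed
  moreover have "is_convex_envelope {l 1..l (Suc S)} (ghat g l S Cv) (Phi g l S Cv)"
    using is_convex_envelope_envelope[OF ghat_eq_mcm_piece] Phi
      is_convex_envelope_cong[of "{l 1..l (Suc S)}" "Phi g l S Cv" envelope] by blast
  ultimately show ?thesis by blast
qed

end
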